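(* There is an absolute constant $c>0$ such that for every star celebrity game $\Gamma=\langle V,(w_u)_{u\in V},\alpha,\beta\rangle$ with $\beta>1$ and $n=|V|$, $PoA(\Gamma)\le c\,n$.
   Context: A celebrity game $\Gamma=\langle V,(w_u)_{u\in V},\alpha,\beta\rangle$ consists of a set of players $V=\{1,\dots,n\}$, celebrity weights $w_u>0$, a link cost $\alpha>0$ and a critical distance $\beta$ with $1\le\beta\le n-1$. A strategy of player $u$ is a set $S_u\subseteq V\setminus\{u\}$; a strategy profile is $S=(S_1,\dots,S_n)$; its outcome graph $G[S]$ is the undirected graph on $V$ with edge set $\{\{u,v\}: u\in S_v\text{ or }v\in S_u\}$. With $d_G$ the graph distance (infinite between different connected components), the cost of player $u$ is $c_u(S)=\alpha|S_u|+\sum_{v:\,d_{G[S]}(u,v)>\beta}w_v$ and the social cost is $C(S)=\sum_{u\in V}c_u(S)$. $S$ is a Nash equilibrium (NE) if no player can strictly decrease its cost by changing only its own strategy. $\mathrm{opt}(\Gamma)=\min_S C(S)$ and $PoA(\Gamma)=\max_{S\text{ NE}}C(S)/\mathrm{opt}(\Gamma)$. $\Gamma$ is a star celebrity game if $G[S]$ is connected for some NE $S$. *)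

theory Defs
  imports Main "HOL-Library.Extended_Nat"
begin

definition players :: "nat \<Rightarrow> nat set" where
  "players n = {1..n}"

definition profiles :: "nat \<Rightarrow> (nat \<Rightarrow> nat set) set" where
  "profiles n = {S. \<forall>u. S u \<subseteq> (if u \<in> players n then players n - {u} else {})}"

definition edge :: "(nat \<Rightarrow> nat set) \<Rightarrow> nat \<Rightarrow> nat \<Rightarrow> bool" where
  "edge S u v \<longleftrightarrow> u \<in> S v \<or> v \<in> S u"

definition walk :: "(nat \<Rightarrow> nat set) \<Rightarrow> nat \<Rightarrow> nat \<Rightarrow> nat \<Rightarrow> bool" where
  "walk S u v k \<longleftrightarrow> (\<exists>p :: nat list. length p = Suc k \<and> p ! 0 = u \<and> p ! k = v \<and>
      (\<forall>i<k. edge S (p ! i) (p ! Suc i)))"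

text \<open>Graph distance (infinite if no path).\<close>
definition gdist :: "(nat \<Rightarrow> nat set) \<Rightarrow> nat \<Rightarrow> nat \<Rightarrow> enat" where
  "gdist S u v = (INF k \<in> {k. walk S u v k}. enat k)"

definition cost :: "nat \<Rightarrow> (nat \<Rightarrow> real) \<Rightarrow> real \<Rightarrow> nat \<Rightarrow> (nat \<Rightarrow> nat set) \<Rightarrow> nat \<Rightarrow> real" where
  "cost n w \<alpha> \<beta> S u = \<alpha> * real (card (S u)) +
      (\<Sum>v \<in> {v \<in> players n. gdist S u v > enat \<beta>}. w v)"

definition social_cost :: "nat \<Rightarrow> (nat \<Rightarrow> real) \<Rightarrow> real \<Rightarrow> nat \<Rightarrow> (nat \<Rightarrow> nat set) \<Rightarrow> real" where
  "social_cost n w \<alpha> \<beta> S = (\<Sum>u \<in> players n. cost n w \<alpha> \<beta> S u)"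

definition is_NE :: "nat \<Rightarrow> (nat \<Rightarrow> real) \<Rightarrow> real \<Rightarrow> nat \<Rightarrow> (nat \<Rightarrow> nat set) \<Rightarrow> bool" where
  "is_NE n w \<alpha> \<beta> S \<longleftrightarrow> S \<in> profiles n \<and>
     (\<forall>u \<in> players n. \<forall>T. T \<subseteq> players n - {u} \<longrightarrow>
        cost n w \<alpha> \<beta> S u \<le> cost n w \<alpha> \<beta> (S(u := T)) u)"

definition opt :: "nat \<Rightarrow> (nat \<Rightarrow> real) \<Rightarrow> real \<Rightarrow> nat \<Rightarrow> real" where
  "opt n w \<alpha> \<beta> = Min (social_cost n w \<alpha> \<beta> ` profiles n)"

definition PoA :: "nat \<Rightarrow> (nat \<Rightarrow> real) \<Rightarrow> real \<Rightarrow> nat \<Rightarrow> real" where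
  "PoA n w \<alpha> \<beta> = Max ((\<lambda>S. social_cost n w \<alpha> \<beta> S / opt n w \<alpha> \<beta>) ` {S. is_NE n w \<alpha> \<beta> S})"

definition connected_outcome :: "nat \<Rightarrow> (nat \<Rightarrow> nat set) \<Rightarrow> bool" where
  "connected_outcome n S \<longleftrightarrow> (\<forall>u \<in> players n. \<forall>v \<in> players n. gdist S u v < \<infinity>)"

definition celebrity_game :: "nat \<Rightarrow> (nat \<Rightarrow> real) \<Rightarrow> real \<Rightarrow> nat \<Rightarrow> bool" where
  "celebrity_game n w \<alpha> \<beta> \<longleftrightarrow> (\<forall>u \<in> players n. w u > 0) \<and> \<alpha> > 0 \<and> 1 \<le> \<beta> \<and> \<beta> \<le> n - 1"

definition star_celebrity_game :: "nat \<Rightarrow> (nat \<Rightarrow> real) \<Rightarrow> real \<Rightarrow> nat \<Rightarrow> bool" where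
  "star_celebrity_game n w \<alpha> \<beta> \<longleftrightarrow> celebrity_game n w \<alpha> \<beta> \<and>
     (\<exists>S. is_NE n w \<alpha> \<beta> S \<and> connected_outcome n S)"

end

theory Submission
  imports Defs
begin

text \<open>Let W be the total weight and B = min (\<alpha> n) W. In a Nash equilibrium every player
  can deviate to buying all links (cost \<alpha> (n - 1), as \<beta> \<ge> 1) or no link at all
  (cost at most W), so the equilibrium costs at most n B. Conversely every profile costs at
  least B / 2: if some player is isolated, it misses all other weights and some other
  player misses its weight, giving W; otherwise every player buys a link or is bought by
  someone, so at least n / 2 links are bought. Hence the price of anarchy is at most 2 n.\<close>

lemma finite_players: "finite (players n)"
  by (simp add: players_def)

lemma card_players: "card (players n) = n"
  by (simp add: players_def)

lemma profile_subset_players: "S \<in> profiles n \<Longrightarrow> S u \<subseteq> players n"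
  unfolding profiles_def by (auto split: if_splits)

lemma profile_outside_players: "S \<in> profiles n \<Longrightarrow> u \<notin> players n \<Longrightarrow> S u = {}"
  unfolding profiles_def by (auto split: if_splits)

lemma finite_profiles: "finite (profiles n)"
proof (rule finite_subset)
  show "profiles n \<subseteq> {f. \<forall>x. (x \<in> players n \<longrightarrow> f x \<in> Pow (players n)) \<and>
                               (x \<notin> players n \<longrightarrow> f x = {})}"
    using profile_subset_players profile_outside_players by blast
  show "finite {f. \<forall>x. (x \<in> players n \<longrightarrow> f x \<in> Pow (players n)) \<and>
                      (x \<notin> players n \<longrightarrow> f x = ({} :: nat set))}"
    by (rule finite_set_of_finite_funs) (auto simp: finite_players)
qed

definition isolated :: "(nat \<Rightarrow> nat set) \<Rightarrow> nat \<Rightarrow> bool" where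
  "isolated S u \<longleftrightarrow> S u = {} \<and> (\<forall>v. u \<notin> S v)"

lemma gdist_le_walk: "walk S u v k \<Longrightarrow> gdist S u v \<le> enat k"
  unfolding gdist_def by (rule INF_lower) simp

lemma gdist_no_walk: "(\<And>k. \<not> walk S u v k) \<Longrightarrow> gdist S u v = \<infinity>"
  unfolding gdist_def by (simp add: top_enat_def[symmetric])

lemma gdist_self: "gdist S u u = 0"
proof -
  have "walk S u u 0"
    unfolding walk_def by (rule exI[of _ "[u]"]) simp
  then have "gdist S u u \<le> 0"
    using gdist_le_walk[of S u u 0] by (simp add: zero_enat_def)
  then show ?thesis by simp
qed

lemma gdist_link: "v \<in> S u \<Longrightarrow> gdist S u v \<le> 1"
proof -
  assume "v \<in> S u"
  then have "walk S u v 1"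
    unfolding walk_def edge_def by (intro exI[of _ "[u, v]"]) simp
  then show ?thesis
    using gdist_le_walk by (simp add: one_enat_def)
qed

lemma gdist_from_isolated:
  assumes "isolated S u" "v \<noteq> u"
  shows "gdist S u v = \<infinity>"
proof (rule gdist_no_walk)
  fix k
  show "\<not> walk S u v k"
  proof
    assume "walk S u v k"
    then obtain p where p: "length p = Suc k" "p ! 0 = u" "p ! k = v"
      "\<forall>i<k. edge S (p ! i) (p ! Suc i)" unfolding walk_def by blast
    with assms(2) have "0 < k" by (cases k) auto
    then have "edge S u (p ! 1)" using p by auto
    then show False using assms(1) unfolding isolated_def edge_def by auto
  qed
qed

lemma gdist_to_isolated:
  assumes "isolated S u" "v \<noteq> u"
  shows "gdist S v u = \<infinity>"
proof (rule gdist_no_walk)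
  fix k
  show "\<not> walk S v u k"
  proof
    assume "walk S v u k"
    then obtain p where p: "length p = Suc k" "p ! 0 = v" "p ! k = u"
      "\<forall>i<k. edge S (p ! i) (p ! Suc i)" unfolding walk_def by blast
    with assms(2) obtain j where "k = Suc j" by (cases k) auto
    then have "edge S (p ! j) u" using p by auto
    then show False using assms(1) unfolding isolated_def edge_def by auto
  qed
qed

lemma sum_weights_nonneg:
  fixes w :: "nat \<Rightarrow> real"
  assumes "\<forall>u \<in> players n. w u > 0"
  shows "0 \<le> (\<Sum>v \<in> {v \<in> players n. P v}. w v)"
  using assms by (intro sum_nonneg) (auto intro: less_imp_le)

lemma sum_weights_mono:
  fixes w :: "nat \<Rightarrow> real"
  assumes "\<forall>u \<in> players n. w u > 0" "A \<subseteq> B" "B \<subseteq> players n"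
  shows "(\<Sum>v\<in>A. w v) \<le> (\<Sum>v\<in>B. w v)"
  using assms finite_subset[OF assms(3) finite_players]
  by (intro sum_mono2) (auto intro: less_imp_le)

lemma cost_nonneg:
  assumes "\<forall>u \<in> players n. w u > 0" "\<alpha> > 0"
  shows "0 \<le> cost n w \<alpha> \<beta> S u"
  unfolding cost_def using sum_weights_nonneg[OF assms(1)] assms(2) by simp

lemma cost_ge_far_weights:
  assumes "\<alpha> > 0" "A \<subseteq> {v \<in> players n. gdist S u v > enat \<beta>}"
    "\<forall>u \<in> players n. w u > 0"
  shows "(\<Sum>v\<in>A. w v) \<le> cost n w \<alpha> \<beta> S u"
proof -
  have "0 \<le> \<alpha> * real (card (S u))" using assms(1) by simp
  then show ?thesis using sum_weights_mono[OF assms(3,2)] unfolding cost_def by simp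
qed

lemma cost_buy_all:
  assumes "u \<in> players n" "1 \<le> \<beta>"
  shows "cost n w \<alpha> \<beta> (S(u := players n - {u})) u = \<alpha> * real (n - 1)"
proof -
  let ?S = "S(u := players n - {u})"
  have "gdist ?S u v \<le> enat \<beta>" if "v \<in> players n" for v
  proof (cases "v = u")
    case True
    then show ?thesis by (simp add: gdist_self)
  next
    case False
    then have "gdist ?S u v \<le> 1" using that by (intro gdist_link) simp
    then show ?thesis using assms(2) by (simp add: one_enat_def order_trans)
  qed
  then have no_far: "{v \<in> players n. gdist ?S u v > enat \<beta>} = {}"
    by (auto simp: not_less[symmetric])
  have "card (players n - {u}) = n - 1"
    using assms(1) by (simp add: finite_players card_players)
  then show ?thesis unfolding cost_def no_far by simp
qed

lemma cost_buy_none: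
  assumes "\<forall>u \<in> players n. w u > 0"
  shows "cost n w \<alpha> \<beta> (S(u := {})) u \<le> (\<Sum>v\<in>players n. w v)"
  unfolding cost_def using sum_weights_mono[OF assms] by simp

lemma NE_cost_le:
  assumes "is_NE n w \<alpha> \<beta> S" "u \<in> players n" "1 \<le> \<beta>" "\<forall>u \<in> players n. w u > 0" "\<alpha> > 0"
  shows "cost n w \<alpha> \<beta> S u \<le> min (\<alpha> * real n) (\<Sum>v\<in>players n. w v)"
proof -
  have "cost n w \<alpha> \<beta> S u \<le> cost n w \<alpha> \<beta> (S(u := players n - {u})) u"
    and "cost n w \<alpha> \<beta> S u \<le> cost n w \<alpha> \<beta> (S(u := {})) u"
    using assms(1,2) unfolding is_NE_def by blast+
  moreover have "\<alpha> * real (n - 1) \<le> \<alpha> * real n"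
    using assms(5) by simp
  ultimately show ?thesis
    using cost_buy_all[OF assms(2,3)] cost_buy_none[OF assms(4), of \<alpha> \<beta> S u] by simp
qed

lemma NE_social_cost_le:
  assumes "is_NE n w \<alpha> \<beta> S" "1 \<le> \<beta>" "\<forall>u \<in> players n. w u > 0" "\<alpha> > 0"
  shows "social_cost n w \<alpha> \<beta> S \<le> real n * min (\<alpha> * real n) (\<Sum>v\<in>players n. w v)"
  using sum_bounded_above[of "players n" "cost n w \<alpha> \<beta> S"] NE_cost_le[OF assms(1) _ assms(2-4)]
  unfolding social_cost_def by (simp add: card_players)

lemma social_cost_ge_weights_if_isolated:
  fixes w :: "nat \<Rightarrow> real"
  assumes pos: "\<forall>u\<in>players n. w u > 0" and "\<alpha> > 0" and "n \<ge> 2"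
    and u: "u \<in> players n" "isolated S u"
  shows "(\<Sum>v\<in>players n. w v) \<le> social_cost n w \<alpha> \<beta> S"
proof -
  define x where "x = (if u = 1 then 2 else 1 :: nat)"
  have x: "x \<in> players n" "x \<noteq> u"
    using \<open>n \<ge> 2\<close> unfolding x_def players_def by auto
  have "(\<Sum>v\<in>players n - {u}. w v) \<le> cost n w \<alpha> \<beta> S u"
    using gdist_from_isolated[OF u(2)] by (intro cost_ge_far_weights[OF \<open>\<alpha> > 0\<close> _ pos]) auto
  moreover have "(\<Sum>v\<in>{u}. w v) \<le> cost n w \<alpha> \<beta> S x"
    using gdist_to_isolated[OF u(2) x(2)] u(1)
    by (intro cost_ge_far_weights[OF \<open>\<alpha> > 0\<close> _ pos]) auto
  moreover have "cost n w \<alpha> \<beta> S u + cost n w \<alpha> \<beta> S x \<le> social_cost n w \<alpha> \<beta> S"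
    using sum_mono2[of "players n" "{u, x}" "cost n w \<alpha> \<beta> S"] u(1) x
      cost_nonneg[OF pos \<open>\<alpha> > 0\<close>] unfolding social_cost_def by (simp add: finite_players)
  moreover have "(\<Sum>v\<in>players n. w v) = w u + (\<Sum>v\<in>players n - {u}. w v)"
    using u(1) by (simp add: finite_players sum.remove)
  ultimately show ?thesis by simp
qed

lemma card_players_le_twice_links:
  assumes S: "S \<in> profiles n" and no_isolated: "\<forall>u\<in>players n. \<not> isolated S u"
  shows "n \<le> 2 * (\<Sum>u\<in>players n. card (S u))"
proof -
  define A where "A = {u \<in> players n. S u \<noteq> {}}"
  have fin: "finite (S u)" for u
    using profile_subset_players[OF S] finite_players by (rule finite_subset)
  have "card A \<le> (\<Sum>u\<in>A. card (S u))"
    using card_eq_sum[of A] sum_mono[of A "\<lambda>_. 1::nat" "\<lambda>u. card (S u)"]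
    by (auto simp: A_def fin card_gt_0_iff Suc_le_eq)
  also have "\<dots> \<le> (\<Sum>u\<in>players n. card (S u))"
    by (intro sum_mono2) (auto simp: A_def finite_players)
  finally have linking: "card A \<le> (\<Sum>u\<in>players n. card (S u))" .
  have "players n - A \<subseteq> (\<Union>v\<in>players n. S v)"
  proof
    fix u assume u: "u \<in> players n - A"
    then obtain v where "u \<in> S v"
      using no_isolated by (auto simp: A_def isolated_def)
    moreover from this have "v \<in> players n"
      using profile_outside_players[OF S] by blast
    ultimately show "u \<in> (\<Union>v\<in>players n. S v)" by blast
  qed
  then have "card (players n - A) \<le> card (\<Union>v\<in>players n. S v)"
    by (intro card_mono) (auto simp: finite_players fin)
  also have "\<dots> \<le> (\<Sum>u\<in>players n. card (S u))"
    by (rule card_UN_le) (simp add: finite_players)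
  finally have linked: "card (players n - A) \<le> (\<Sum>u\<in>players n. card (S u))" .
  have "card A + card (players n - A) = n"
    using card_Diff_subset[of A "players n"] card_mono[of "players n" A]
    by (auto simp: A_def finite_players card_players)
  then show ?thesis using linking linked by linarith
qed

lemma social_cost_ge_links:
  assumes pos: "\<forall>u\<in>players n. w u > 0"
  shows "(\<Sum>u\<in>players n. \<alpha> * real (card (S u))) \<le> social_cost n w \<alpha> \<beta> S"
  unfolding social_cost_def cost_def using sum_weights_nonneg[OF pos] by (intro sum_mono) simp

lemma social_cost_ge_half_bound:
  fixes w :: "nat \<Rightarrow> real"
  assumes pos: "\<forall>u\<in>players n. w u > 0" and "\<alpha> > 0" and "n \<ge> 2" and S: "S \<in> profiles n"
  shows "min (\<alpha> * real n) (\<Sum>v\<in>players n. w v) / 2 \<le> social_cost n w \<alpha> \<beta> S"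
proof (cases "\<exists>u\<in>players n. isolated S u")
  case True
  then have "(\<Sum>v\<in>players n. w v) \<le> social_cost n w \<alpha> \<beta> S"
    using social_cost_ge_weights_if_isolated[OF pos \<open>\<alpha> > 0\<close> \<open>n \<ge> 2\<close>] by blast
  moreover have "0 \<le> (\<Sum>v\<in>players n. w v)"
    using pos by (intro sum_nonneg) (auto intro: less_imp_le)
  ultimately show ?thesis by linarith
next
  case False
  have "real n \<le> 2 * real (\<Sum>u\<in>players n. card (S u))"
  proof -
    have "n \<le> 2 * (\<Sum>u\<in>players n. card (S u))"
      using card_players_le_twice_links[OF S] False by blast
    then show ?thesis by (metis of_nat_le_iff of_nat_mult of_nat_numeral)
  qed
  then have "\<alpha> * real n \<le> 2 * (\<alpha> * real (\<Sum>u\<in>players n. card (S u)))"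
    using mult_left_mono[of _ _ \<alpha>] \<open>\<alpha> > 0\<close> by fastforce
  moreover have "\<alpha> * real (\<Sum>u\<in>players n. card (S u)) \<le> social_cost n w \<alpha> \<beta> S"
    using social_cost_ge_links[OF pos, of \<alpha> S \<beta>] by (simp add: sum_distrib_left)
  ultimately show ?thesis by linarith
qed

lemma opt_ge_half_bound:
  fixes w :: "nat \<Rightarrow> real"
  assumes "\<forall>u\<in>players n. w u > 0" "\<alpha> > 0" "n \<ge> 2"
  shows "min (\<alpha> * real n) (\<Sum>v\<in>players n. w v) / 2 \<le> opt n w \<alpha> \<beta>"
proof -
  have "(\<lambda>_. {}) \<in> profiles n" unfolding profiles_def by simp
  then show ?thesis
    unfolding opt_def using finite_profiles social_cost_ge_half_bound[OF assms]
    by (subst Min_ge_iff) auto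
qed

lemma bound_pos:
  fixes w :: "nat \<Rightarrow> real"
  assumes "\<forall>u\<in>players n. w u > 0" "\<alpha> > 0" "n \<ge> 1"
  shows "0 < min (\<alpha> * real n) (\<Sum>v\<in>players n. w v)"
proof -
  have "1 \<in> players n" using assms(3) by (simp add: players_def)
  then have "0 < (\<Sum>v\<in>players n. w v)"
    using assms(1) by (intro sum_pos) (auto simp: finite_players)
  then show ?thesis using assms(2,3) by simp
qed

lemma PoA_le_twice_players:
  fixes w :: "nat \<Rightarrow> real"
  assumes game: "star_celebrity_game n w \<alpha> \<beta>" and "\<beta> > 1"
  shows "PoA n w \<alpha> \<beta> \<le> 2 * real n"
proof -
  have pos: "\<forall>u\<in>players n. w u > 0" and "\<alpha> > 0" "1 \<le> \<beta>" "\<beta> \<le> n - 1"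
    using game unfolding star_celebrity_game_def celebrity_game_def by auto
  obtain S0 where "is_NE n w \<alpha> \<beta> S0"
    using game unfolding star_celebrity_game_def by blast
  have "n \<ge> 2" using \<open>\<beta> > 1\<close> \<open>\<beta> \<le> n - 1\<close> by linarith
  define B where "B = min (\<alpha> * real n) (\<Sum>v\<in>players n. w v)"
  have "0 < B" "B / 2 \<le> opt n w \<alpha> \<beta>"
    using bound_pos[OF pos \<open>\<alpha> > 0\<close>] opt_ge_half_bound[OF pos \<open>\<alpha> > 0\<close> \<open>n \<ge> 2\<close>] \<open>n \<ge> 2\<close>
    unfolding B_def by auto
  have "social_cost n w \<alpha> \<beta> S / opt n w \<alpha> \<beta> \<le> 2 * real n" if "is_NE n w \<alpha> \<beta> S" for S
  proof -
    have "social_cost n w \<alpha> \<beta> S \<le> real n * B"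
      using NE_social_cost_le[OF that \<open>1 \<le> \<beta>\<close> pos \<open>\<alpha> > 0\<close>] unfolding B_def .
    also have "\<dots> \<le> 2 * real n * opt n w \<alpha> \<beta>"
      using mult_left_mono[OF \<open>B / 2 \<le> opt n w \<alpha> \<beta>\<close>, of "2 * real n"] by simp
    finally show ?thesis
      using \<open>0 < B\<close> \<open>B / 2 \<le> opt n w \<alpha> \<beta>\<close> by (simp add: pos_divide_le_eq)
  qed
  moreover have "finite {S. is_NE n w \<alpha> \<beta> S}"
    by (rule finite_subset[OF _ finite_profiles[of n]]) (auto simp: is_NE_def)
  ultimately show ?thesis
    unfolding PoA_def using \<open>is_NE n w \<alpha> \<beta> S0\<close> by (subst Max_le_iff) auto
qed

theorem theorem2:
  shows "\<exists>c::real. c > 0 \<and> (\<forall>(n::nat) (w::nat \<Rightarrow> real) (\<alpha>::real) (\<beta>::nat).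
           star_celebrity_game n w \<alpha> \<beta> \<and> \<beta> > 1 \<longrightarrow> PoA n w \<alpha> \<beta> \<le> c * real n)"
  using PoA_le_twice_players by (intro exI[of _ 2]) auto

end
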